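(* Let $A$ be a finite alphabet, $E\subseteq W(A)$ and $\vec s\in V^\infty(A)$ such that $E$ is large in $\vec s$. Then there exists a sequence $\vec w=(w_n(x))_{n=0}^\infty\in V^\infty(A)$ with $\vec w\le\vec s$ such that, setting $F_n=\langle (w_i(x))_{i=0}^n\rangle_c$, the set $E\cap E_{F_n}$ is large in $(w_{n+1+i}(x))_{i=0}^\infty$ for every $n\in\mathbb N$.
   Context: $\mathbb N=\{0,1,2,\dots\}$. Let $A$ be a finite nonempty alphabet. $W(A)$ denotes the set of all finite words over $A$, including the empty word; words are concatenated by juxtaposition. Fix a symbol $x\notin A$. A variable word over $A$ is a finite word over $A\cup\{x\}$ in which $x$ occurs at least once; $V(A)$ is the set of variable words. For $s(x)\in V(A)$ and $a\in A\cup\{x\}$, $s(a)$ is obtained by replacing every occurrence of $x$ by $a$. $V^\infty(A)$ is the set of infinite sequences of variable words. For a sequence $(s_n(x))_{n\in I}$ of variable words indexed by a set $I\subseteq\mathbb N$ that is either a finite interval or of the form $\{m,m+1,\dots\}$: the constant span $\langle (s_n(x))_{n\in I}\rangle_c$ is the set of all words $s_{l_0}(a_0)s_{l_1}(a_1)\cdots s_{l_j}(a_j)$ with $j\ge 0$, $l_0<\dots<l_j$ in $I$ and $a_0,\dots,a_j\in A$; the variable span $\langle (s_n(x))_{n\in I}\rangle_v$ is the set of all words $s_{l_0}(a_0)\cdots s_{l_j}(a_j)$ with $j\ge0$, $l_0<\dots<l_j$ in $I$, $a_0,\dots,a_j\in A\cup\{x\}$ and at least one $a_i=x$. Extracted subsequences: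 let $\vec s=(s_n(x))_{n=0}^\infty\in V^\infty(A)$. A finite sequence $(t_n(x))_{n=0}^l$ of variable words is an extracted subsequence of $\vec s$ if there exist integers $0=m_0<m_1<\dots<m_{l+1}$ with $t_i(x)\in\langle (s_n(x))_{n=m_i}^{m_{i+1}-1}\rangle_v$ for all $0\le i\le l$. An infinite sequence $\vec t=(t_n(x))_{n=0}^\infty$ is an extracted subsequence of $\vec s$ if every initial segment $(t_n(x))_{n=0}^l$ is a finite extracted subsequence of $\vec s$. We write $\vec t\le\vec s$. A set $E\subseteq W(A)$ is large in $\vec s\in V^\infty(A)$ if $E\cap\langle\vec w\rangle_c\neq\emptyset$ for every infinite extracted subsequence $\vec w$ of $\vec s$. For $E\subseteq W(A)$ and nonempty $F\subseteq W(A)$, $E_F=\{z\in W(A): wz\in E\text{ for every }w\in F\}$. *)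

theory Defs
  imports Main
begin

text \<open>Letters of A \<union> {x} are represented as 'a option, with None playing the role of
the variable x.\<close>

definition var_word :: "'a set \<Rightarrow> 'a option list \<Rightarrow> bool" where
  "var_word A w \<longleftrightarrow> set w \<subseteq> insert None (Some ` A) \<and> None \<in> set w"

definition var_seq :: "'a set \<Rightarrow> (nat \<Rightarrow> 'a option list) \<Rightarrow> bool" where
  "var_seq A s \<longleftrightarrow> (\<forall>n. var_word A (s n))"

definition csubst :: "'a option list \<Rightarrow> 'a \<Rightarrow> 'a list" where
  "csubst w a = map (\<lambda>c. case c of None \<Rightarrow> a | Some b \<Rightarrow> b) w"

definition vsubst :: "'a option list \<Rightarrow> 'a option \<Rightarrow> 'a option list" where
  "vsubst w b = map (\<lambda>c. case c of None \<Rightarrow> b | Some a \<Rightarrow> Some a) w"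

definition cspan :: "'a set \<Rightarrow> (nat \<Rightarrow> 'a option list) \<Rightarrow> nat set \<Rightarrow> 'a list set" where
  "cspan A s I = {concat (map (\<lambda>(l, a). csubst (s l) a) ps) | ps.
      ps \<noteq> [] \<and> sorted_wrt (<) (map fst ps) \<and> set (map fst ps) \<subseteq> I \<and> set (map snd ps) \<subseteq> A}"

definition vspan :: "'a set \<Rightarrow> (nat \<Rightarrow> 'a option list) \<Rightarrow> nat set \<Rightarrow> 'a option list set" where
  "vspan A s I = {concat (map (\<lambda>(l, b). vsubst (s l) b) ps) | ps.
      ps \<noteq> [] \<and> sorted_wrt (<) (map fst ps) \<and> set (map fst ps) \<subseteq> I
      \<and> set (map snd ps) \<subseteq> insert None (Some ` A) \<and> None \<in> set (map snd ps)}"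

definition extracted :: "'a set \<Rightarrow> (nat \<Rightarrow> 'a option list) \<Rightarrow> (nat \<Rightarrow> 'a option list) \<Rightarrow> bool" where
  "extracted A t s \<longleftrightarrow> (\<forall>l. \<exists>m :: nat \<Rightarrow> nat. m 0 = 0 \<and> (\<forall>i\<le>l. m i < m (Suc i))
       \<and> (\<forall>i\<le>l. t i \<in> vspan A s {m i..<m (Suc i)}))"

definition large :: "'a set \<Rightarrow> 'a list set \<Rightarrow> (nat \<Rightarrow> 'a option list) \<Rightarrow> bool" where
  "large A E s \<longleftrightarrow> (\<forall>w. var_seq A w \<and> extracted A w s \<longrightarrow> E \<inter> cspan A w UNIV \<noteq> {})"

definition shiftset :: "'a set \<Rightarrow> 'a list set \<Rightarrow> 'a list set \<Rightarrow> 'a list set" where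
  "shiftset A E F = {z \<in> lists A. \<forall>w\<in>F. w @ z \<in> E}"

end

theory Submission
  imports Defs
begin

(* The lemma is a consequence of an infinite Hales--Jewett theorem: for every set E of words,
   every sequence s of variable words has an extracted subsequence w whose constant span lies
   entirely inside E or entirely outside E.  If E is large in s the second alternative is
   impossible, so the constant span of w lies in E.  Then, for each n, a constant instance z of
   the first word of any extracted subsequence of the tail (w (n + 1 + i))_i belongs to the
   constant span of w beyond n; hence z and every g @ z with g in F_n = <w_0, ..., w_n>_c lie in
   the constant span of w, so z is in E and in E_{F_n}.

   The Hales--Jewett theorem is proved with idempotent ultrafilters (Bergelson--Blass--Hindman). *)

definition ultrafilter :: "'b set set \<Rightarrow> bool" where
  "ultrafilter U \<longleftrightarrow> {} \<notin> U \<and> (\<forall>X Y. X \<in> U \<longrightarrow> X \<subseteq> Y \<longrightarrow> Y \<in> U)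
     \<and> (\<forall>X\<in>U. \<forall>Y\<in>U. X \<inter> Y \<in> U) \<and> (\<forall>X. X \<in> U \<or> - X \<in> U)"

definition fip :: "'b set set \<Rightarrow> bool" where
  "fip F \<longleftrightarrow> (\<forall>G. finite G \<longrightarrow> G \<subseteq> F \<longrightarrow> \<Inter>G \<noteq> {})"

lemma ultrafilter_empty: "ultrafilter U \<Longrightarrow> {} \<notin> U"
  by (simp add: ultrafilter_def)

lemma ultrafilter_mono: "ultrafilter U \<Longrightarrow> X \<in> U \<Longrightarrow> X \<subseteq> Y \<Longrightarrow> Y \<in> U"
  by (simp add: ultrafilter_def)

lemma ultrafilter_Int: "ultrafilter U \<Longrightarrow> X \<in> U \<Longrightarrow> Y \<in> U \<Longrightarrow> X \<inter> Y \<in> U"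
  by (simp add: ultrafilter_def)

lemma ultrafilter_UNIV: "ultrafilter U \<Longrightarrow> UNIV \<in> U"
  unfolding ultrafilter_def by (metis Compl_empty_eq)

lemma ultrafilter_Compl: "ultrafilter U \<Longrightarrow> - X \<in> U \<longleftrightarrow> X \<notin> U"
  unfolding ultrafilter_def by (metis Compl_disjoint)

lemma ultrafilter_nonempty: "ultrafilter U \<Longrightarrow> X \<in> U \<Longrightarrow> X \<noteq> {}"
  by (auto simp: ultrafilter_def)

lemma ultrafilter_Inter:
  assumes "ultrafilter U"
  shows "finite G \<Longrightarrow> G \<subseteq> U \<Longrightarrow> \<Inter>G \<in> U"
proof (induction G rule: finite_induct)
  case empty
  then show ?case by (simp add: ultrafilter_UNIV assms)
next
  case (insert X G)
  then show ?case by (simp add: ultrafilter_Int assms)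
qed

lemma ultrafilter_INT:
  "ultrafilter U \<Longrightarrow> finite I \<Longrightarrow> (\<And>i. i \<in> I \<Longrightarrow> f i \<in> U) \<Longrightarrow> (\<Inter>i\<in>I. f i) \<in> U"
  using ultrafilter_Inter[of U "f ` I"] by auto

text \<open>Ultrafilters are maximal among proper filters, so one contained in another is equal to it.\<close>
lemma ultrafilter_eq: "ultrafilter U \<Longrightarrow> ultrafilter V \<Longrightarrow> U \<subseteq> V \<Longrightarrow> U = V"
  unfolding ultrafilter_def by (metis Compl_disjoint subsetD subsetI subset_antisym)

lemma fipD: "fip M \<Longrightarrow> finite G \<Longrightarrow> G \<subseteq> M \<Longrightarrow> \<Inter>G \<noteq> {}"
  unfolding fip_def by blast

lemma fip_insert_superset:
  assumes M: "fip M" and G: "finite G" "G \<subseteq> M" and Y: "\<Inter>G \<subseteq> Y"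
  shows "fip (insert Y M)"
  unfolding fip_def
proof (intro allI impI)
  fix H assume H: "finite H" "H \<subseteq> insert Y M"
  have "\<Inter>(G \<union> (H - {Y})) \<noteq> {}" by (rule fipD[OF M]) (use G H in auto)
  moreover have "\<Inter>(G \<union> (H - {Y})) \<subseteq> \<Inter>H" using Y by auto
  ultimately show "\<Inter>H \<noteq> {}" by blast
qed

text \<open>Of a set and its complement, at least one can be added preserving the finite intersection
  property: otherwise two finite subfamilies would cover X and its complement with empty
  intersections.\<close>
lemma fip_insert_Compl:
  assumes M: "fip M"
  shows "fip (insert X M) \<or> fip (insert (- X) M)"
proof (rule ccontr)
  assume "\<not> (fip (insert X M) \<or> fip (insert (- X) M))"
  then obtain G1 G2 where G1: "finite G1" "G1 \<subseteq> insert X M" "\<Inter>G1 = {}"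
    and G2: "finite G2" "G2 \<subseteq> insert (- X) M" "\<Inter>G2 = {}" unfolding fip_def by blast
  have "\<Inter>((G1 - {X}) \<union> (G2 - {- X})) \<noteq> {}" by (rule fipD[OF M]) (use G1 G2 in auto)
  then obtain z where z: "z \<in> \<Inter>((G1 - {X}) \<union> (G2 - {- X}))" by blast
  show False
  proof (cases "z \<in> X")
    case True
    then have "z \<in> \<Inter>G1" using z by auto
    then show False using G1 by blast
  next
    case False
    then have "z \<in> \<Inter>G2" using z by auto
    then show False using G2 by blast
  qed
qed

lemma maximal_fip_ultrafilter:
  assumes M: "fip M" and max: "\<And>X. fip (insert X M) \<Longrightarrow> X \<in> M"
  shows "ultrafilter M"
  unfolding ultrafilter_def
proof (intro conjI allI impI ballI)
  show "{} \<notin> M"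
    using fipD[OF M, of "{{}}"] by auto
  show "Y \<in> M" if "X \<in> M" "X \<subseteq> Y" for X Y
    using max fip_insert_superset[OF M, of "{X}" Y] that by auto
  show "X \<inter> Y \<in> M" if "X \<in> M" "Y \<in> M" for X Y
    using max fip_insert_superset[OF M, of "{X, Y}" "X \<inter> Y"] that by auto
  show "X \<in> M \<or> - X \<in> M" for X
    using max fip_insert_Compl[OF M, of X] by blast
qed

lemma fip_ultrafilter:
  assumes F: "fip F"
  shows "\<exists>U. ultrafilter U \<and> F \<subseteq> U"
proof -
  let ?A = "{G. F \<subseteq> G \<and> fip G}"
  have "\<exists>M\<in>?A. \<forall>X\<in>?A. M \<subseteq> X \<longrightarrow> X = M"
  proof (rule subset_Zorn_nonempty)
    show "?A \<noteq> {}" using F by blast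
  next
    fix C assume C: "C \<noteq> {}" "subset.chain ?A C"
    have "fip (\<Union>C)" unfolding fip_def
    proof (intro allI impI)
      fix G assume G: "finite G" "G \<subseteq> \<Union>C"
      obtain B where B: "B \<in> C" "G \<subseteq> B" by (rule finite_subset_Union_chain[OF G C])
      have "fip B" using B(1) C(2) unfolding subset.chain_def by blast
      then show "\<Inter>G \<noteq> {}" using fipD G(1) B(2) by blast
    qed
    moreover have "F \<subseteq> \<Union>C" using C unfolding subset.chain_def by blast
    ultimately show "\<Union>C \<in> ?A" by blast
  qed
  then obtain M where M: "F \<subseteq> M" "fip M" and max: "\<forall>X\<in>?A. M \<subseteq> X \<longrightarrow> X = M"
    by blast
  have "ultrafilter M"
  proof (rule maximal_fip_ultrafilter[OF M(2)])
    fix X assume "fip (insert X M)"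
    then show "X \<in> M" using max M(1) by blast
  qed
  then show ?thesis using M(1) by blast
qed

definition umap :: "('b \<Rightarrow> 'c) \<Rightarrow> 'b set set \<Rightarrow> 'c set set" where
  "umap f U = {X. f -` X \<in> U}"

lemma umap_ultrafilter:
  assumes U: "ultrafilter U"
  shows "ultrafilter (umap f U)"
  unfolding ultrafilter_def umap_def
  using ultrafilter_empty[OF U] ultrafilter_Int[OF U] ultrafilter_Compl[OF U]
    ultrafilter_mono[OF U, of "f -` _" "f -` _"]
  by (auto simp: vimage_Int vimage_Compl) (meson vimage_mono)

text \<open>Ultrafilters on the free monoid of lists form a semigroup under the product below
  (the extension of concatenation to the Stone-Cech compactification), written
  \<open>u \<cdot> v\<close> in comments: \<open>X \<in> u \<cdot> v\<close> iff for u-almost all x the set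
  \<open>{y. x @ y \<in> X}\<close> belongs to v, i.e. iff \<open>lquot X v \<in> u\<close>.\<close>
definition lquot :: "'c list set \<Rightarrow> 'c list set set \<Rightarrow> 'c list set" where
  "lquot X v = {x. {y. x @ y \<in> X} \<in> v}"

definition uprod :: "'c list set set \<Rightarrow> 'c list set set \<Rightarrow> 'c list set set" where
  "uprod u v = {X. lquot X v \<in> u}"

lemma uprod_iff: "X \<in> uprod u v \<longleftrightarrow> lquot X v \<in> u"
  by (simp add: uprod_def)

lemma lquot_mono: "ultrafilter v \<Longrightarrow> X \<subseteq> X' \<Longrightarrow> lquot X v \<subseteq> lquot X' v"
  unfolding lquot_def by (auto elim: ultrafilter_mono)

lemma lquot_Compl: "ultrafilter v \<Longrightarrow> lquot (- X) v = - lquot X v"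
  unfolding lquot_def using ultrafilter_Compl[of v] by (auto simp: Collect_neg_eq)

lemma uprod_ultrafilter:
  assumes u: "ultrafilter u" and v: "ultrafilter v"
  shows "ultrafilter (uprod u v)"
proof -
  have "lquot {} v = {}" unfolding lquot_def using ultrafilter_empty[OF v] by simp
  then have empty: "{} \<notin> uprod u v" using ultrafilter_empty[OF u] by (simp add: uprod_iff)
  have mono: "Y \<in> uprod u v" if "X \<in> uprod u v" "X \<subseteq> Y" for X Y
    using ultrafilter_mono[OF u] lquot_mono[OF v that(2)] that(1) unfolding uprod_iff by blast
  have Int: "X \<inter> Y \<in> uprod u v" if "X \<in> uprod u v" "Y \<in> uprod u v" for X Y
  proof -
    have "lquot X v \<inter> lquot Y v \<subseteq> lquot (X \<inter> Y) v"
      unfolding lquot_def using ultrafilter_Int[OF v] by (auto simp: Collect_conj_eq)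
    moreover have "lquot X v \<inter> lquot Y v \<in> u"
      using that ultrafilter_Int[OF u] unfolding uprod_iff by blast
    ultimately show ?thesis using ultrafilter_mono[OF u] unfolding uprod_iff by blast
  qed
  have Compl: "X \<in> uprod u v \<or> - X \<in> uprod u v" for X
    using ultrafilter_Compl[OF u, of "lquot X v"] unfolding uprod_iff lquot_Compl[OF v] by blast
  show ?thesis unfolding ultrafilter_def
    by (intro conjI empty allI impI ballI Compl) (auto intro: mono Int)
qed

lemma uprod_memI:
  assumes "ultrafilter u" "X \<in> u" "\<And>x. x \<in> X \<Longrightarrow> {y. x @ y \<in> Y} \<in> v"
  shows "Y \<in> uprod u v"
proof -
  have "X \<subseteq> lquot Y v" using assms(3) unfolding lquot_def by blast
  then show ?thesis using ultrafilter_mono[OF assms(1,2)] by (simp add: uprod_iff)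
qed

lemma uprod_assoc: "uprod (uprod u v) w = uprod u (uprod v w)"
  unfolding uprod_def lquot_def by simp

lemma umap_uprod:
  assumes hom: "\<And>x y. f (x @ y) = f x @ f y"
  shows "umap f (uprod u v) = uprod (umap f u) (umap f v)"
proof -
  have "f -` lquot X (umap f v) = lquot (f -` X) v" for X
    unfolding lquot_def umap_def by (auto simp: hom)
  then show ?thesis unfolding umap_def uprod_def by auto
qed

definition prod_closed :: "'c list set set set \<Rightarrow> bool" where
  "prod_closed S \<longleftrightarrow> (\<forall>u\<in>S. \<forall>v\<in>S. uprod u v \<in> S)"

lemma prod_closedD: "prod_closed S \<Longrightarrow> u \<in> S \<Longrightarrow> v \<in> S \<Longrightarrow> uprod u v \<in> S"
  unfolding prod_closed_def by blast

text \<open>A family \<open>BB\<close> of sets that is inherited by products determines the closed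
  subsemigroup \<open>Ult\<close> of all ultrafilters containing it.  Its closed subsets are the sets
  \<open>Clo F\<close> of members of \<open>Ult\<close> containing a family \<open>F\<close>; on them the usual
  compactness arguments of the algebra of the Stone-Cech compactification can be
  carried out without any topology.\<close>
locale closed_ultrafilters =
  fixes BB :: "'c list set set"
  assumes BB_uprod: "ultrafilter u \<Longrightarrow> ultrafilter v \<Longrightarrow> BB \<subseteq> u \<Longrightarrow> BB \<subseteq> v \<Longrightarrow> BB \<subseteq> uprod u v"
begin

definition Ult :: "'c list set set set" where
  "Ult = {U. ultrafilter U \<and> BB \<subseteq> U}"

definition Clo :: "'c list set set \<Rightarrow> 'c list set set set" where
  "Clo F = {U \<in> Ult. F \<subseteq> U}"

lemma Ult_uprod: "u \<in> Ult \<Longrightarrow> v \<in> Ult \<Longrightarrow> uprod u v \<in> Ult"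
  unfolding Ult_def using BB_uprod uprod_ultrafilter by blast

lemma Ult_ultrafilter: "u \<in> Ult \<Longrightarrow> ultrafilter u"
  by (simp add: Ult_def)

lemma Clo_Ult: "Clo F \<subseteq> Ult"
  by (auto simp: Clo_def)

lemma Clo_ultrafilter: "u \<in> Clo F \<Longrightarrow> ultrafilter u"
  using Clo_Ult Ult_ultrafilter by blast

lemma Clo_anti: "F \<subseteq> F' \<Longrightarrow> Clo F' \<subseteq> Clo F"
  by (auto simp: Clo_def)

lemma Clo_Un: "Clo (F \<union> F') = Clo F \<inter> Clo F'"
  by (auto simp: Clo_def)

lemma Clo_empty: "Clo {} = Ult"
  by (auto simp: Clo_def)

lemma Clo_Union: "C \<noteq> {} \<Longrightarrow> Clo (\<Union>C) = (\<Inter>F\<in>C. Clo F)"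
  by (auto simp: Clo_def)

lemma Clo_compact:
  assumes "\<And>G. finite G \<Longrightarrow> G \<subseteq> F \<Longrightarrow> Clo G \<noteq> {}"
  shows "Clo F \<noteq> {}"
proof -
  have "fip (BB \<union> F)" unfolding fip_def
  proof (intro allI impI)
    fix H assume H: "finite H" "H \<subseteq> BB \<union> F"
    obtain U where U: "U \<in> Clo (H \<inter> F)" using assms[of "H \<inter> F"] H by blast
    then have "H \<subseteq> U" "ultrafilter U" using H unfolding Clo_def Ult_def by blast+
    then show "\<Inter>H \<noteq> {}" using ultrafilter_Inter ultrafilter_nonempty H(1) by blast
  qed
  then obtain U where "ultrafilter U" "BB \<union> F \<subseteq> U" using fip_ultrafilter by blast
  then have "U \<in> Clo F" unfolding Clo_def Ult_def by blast
  then show ?thesis by blast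
qed

text \<open>The compactness step behind the next lemma: an ultrafilter U in the closure of
  \<open>Clo F \<cdot> x\<close> arises from some y in \<open>Clo F\<close>, in the sense that y contains
  \<open>lquot X x\<close> for every X in U.\<close>
lemma uprod_right_preimage:
  assumes x: "x \<in> Ult" and U: "U \<in> Clo {X. \<forall>y\<in>Clo F. X \<in> uprod y x}"
  obtains y where "y \<in> Clo F" "(\<lambda>X. lquot X x) ` U \<subseteq> y"
proof -
  have Uu: "ultrafilter U" using U Clo_ultrafilter by blast
  have xu: "ultrafilter x" using x Ult_ultrafilter by blast
  have "Clo (F \<union> (\<lambda>X. lquot X x) ` U) \<noteq> {}"
  proof (rule Clo_compact)
    fix G assume G: "finite G" "G \<subseteq> F \<union> (\<lambda>X. lquot X x) ` U"
    obtain G2 where G2: "G2 \<subseteq> U" "finite G2" "G \<inter> (\<lambda>X. lquot X x) ` U = (\<lambda>X. lquot X x) ` G2"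
      using finite_subset_image[of "G \<inter> (\<lambda>X. lquot X x) ` U" "\<lambda>X. lquot X x" U] G(1) by blast
    have Z: "\<Inter>G2 \<in> U" using ultrafilter_Inter[OF Uu G2(2,1)] .
    have "\<exists>y\<in>Clo F. \<Inter>G2 \<in> uprod y x"
    proof (rule ccontr)
      assume "\<not> ?thesis"
      then have "\<forall>y\<in>Clo F. - \<Inter>G2 \<in> uprod y x"
        using ultrafilter_Compl uprod_ultrafilter xu Clo_ultrafilter by blast
      then have "- \<Inter>G2 \<in> U" using U unfolding Clo_def by blast
      then show False using Z ultrafilter_Compl[OF Uu] by blast
    qed
    then obtain y where y: "y \<in> Clo F" "lquot (\<Inter>G2) x \<in> y" unfolding uprod_iff by blast
    have "lquot X x \<in> y" if "X \<in> G2" for X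
    proof -
      have "lquot (\<Inter>G2) x \<subseteq> lquot X x" using that lquot_mono[OF xu] by blast
      then show ?thesis using y(2) ultrafilter_mono[OF Clo_ultrafilter[OF y(1)]] by blast
    qed
    then have "(\<lambda>X. lquot X x) ` G2 \<subseteq> y" by blast
    moreover have "F \<subseteq> y" "y \<in> Ult" using y(1) unfolding Clo_def by auto
    moreover have "G \<subseteq> F \<union> (\<lambda>X. lquot X x) ` G2" using G(2) G2(3) by blast
    ultimately have "y \<in> Clo G" unfolding Clo_def by blast
    then show "Clo G \<noteq> {}" by blast
  qed
  then obtain y where "y \<in> Clo (F \<union> (\<lambda>X. lquot X x) ` U)" by blast
  then show ?thesis using that unfolding Clo_def by blast
qed

text \<open>Right multiplication by a fixed element of \<open>Ult\<close> maps closed sets to closed sets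
  (it is continuous on a compact space).\<close>
lemma uprod_right_image_closed:
  assumes x: "x \<in> Ult"
  shows "{uprod y x | y. y \<in> Clo F} = Clo {X. \<forall>y\<in>Clo F. X \<in> uprod y x}"
proof (intro equalityI subsetI)
  fix r assume "r \<in> {uprod y x | y. y \<in> Clo F}"
  then obtain y where y: "y \<in> Clo F" "r = uprod y x" by blast
  then have "r \<in> Ult" using Ult_uprod x Clo_Ult by blast
  then show "r \<in> Clo {X. \<forall>y\<in>Clo F. X \<in> uprod y x}" using y unfolding Clo_def by blast
next
  fix U assume U: "U \<in> Clo {X. \<forall>y\<in>Clo F. X \<in> uprod y x}"
  obtain y where y: "y \<in> Clo F" "(\<lambda>X. lquot X x) ` U \<subseteq> y"
    using uprod_right_preimage[OF x U] by blast
  then have "U \<subseteq> uprod y x" by (auto simp: uprod_iff)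
  moreover have "ultrafilter (uprod y x)"
    using uprod_ultrafilter Clo_ultrafilter[OF y(1)] Ult_ultrafilter[OF x] by blast
  ultimately have "U = uprod y x" using ultrafilter_eq Clo_ultrafilter[OF U] by blast
  then show "U \<in> {uprod y x | y. y \<in> Clo F}" using y(1) by auto
qed

lemma uprod_fixpoints_closed:
  assumes x: "x \<in> Ult"
  shows "Clo (F \<union> (\<lambda>X. lquot X x) ` x) = {y \<in> Clo F. uprod y x = x}"
proof (intro equalityI subsetI)
  fix y assume y: "y \<in> Clo (F \<union> (\<lambda>X. lquot X x) ` x)"
  then have yF: "y \<in> Clo F" unfolding Clo_def by blast
  have "x \<subseteq> uprod y x" using y unfolding Clo_def by (auto simp: uprod_iff)
  then have "x = uprod y x"
    using ultrafilter_eq[OF Ult_ultrafilter[OF x] uprod_ultrafilter] Clo_ultrafilter[OF yF]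
      Ult_ultrafilter[OF x] by blast
  then show "y \<in> {y \<in> Clo F. uprod y x = x}" using yF by simp
next
  fix y assume y: "y \<in> {y \<in> Clo F. uprod y x = x}"
  then have "(\<lambda>X. lquot X x) ` x \<subseteq> y" by (auto simp: uprod_iff)
  then show "y \<in> Clo (F \<union> (\<lambda>X. lquot X x) ` x)" using y unfolding Clo_def by simp
qed

lemma Clo_minimal:
  assumes ne: "Clo F0 \<noteq> {}" and Q: "Q (Clo F0)"
    and Inter: "\<And>S. S \<noteq> {} \<Longrightarrow> (\<forall>s\<in>S. Q s) \<Longrightarrow> Q (\<Inter>S)"
  obtains F where "Clo F \<subseteq> Clo F0" "Clo F \<noteq> {}" "Q (Clo F)"
    "\<And>F'. Clo F' \<subseteq> Clo F \<Longrightarrow> Clo F' \<noteq> {} \<Longrightarrow> Q (Clo F') \<Longrightarrow> Clo F' = Clo F"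
proof -
  let ?A = "{F. F0 \<subseteq> F \<and> Clo F \<noteq> {} \<and> Q (Clo F)}"
  have "\<exists>M\<in>?A. \<forall>X\<in>?A. M \<subseteq> X \<longrightarrow> X = M"
  proof (rule subset_Zorn_nonempty)
    show "?A \<noteq> {}" using ne Q by blast
  next
    fix C assume C: "C \<noteq> {}" "subset.chain ?A C"
    have CA: "C \<subseteq> ?A" using C(2) unfolding subset.chain_def by blast
    have "Clo (\<Union>C) \<noteq> {}"
    proof (rule Clo_compact)
      fix G assume G: "finite G" "G \<subseteq> \<Union>C"
      obtain B where B: "B \<in> C" "G \<subseteq> B" by (rule finite_subset_Union_chain[OF G C])
      then have "Clo B \<subseteq> Clo G" using Clo_anti by blast
      then show "Clo G \<noteq> {}" using B CA by blast
    qed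
    moreover have "Q (Clo (\<Union>C))"
      unfolding Clo_Union[OF C(1)] by (rule Inter) (use C CA in auto)
    moreover have "F0 \<subseteq> \<Union>C" using C CA by blast
    ultimately show "\<Union>C \<in> ?A" by blast
  qed
  then obtain M where M: "M \<in> ?A" and max: "\<forall>X\<in>?A. M \<subseteq> X \<longrightarrow> X = M" by blast
  have "Clo F' = Clo M" if "Clo F' \<subseteq> Clo M" "Clo F' \<noteq> {}" "Q (Clo F')" for F'
  proof -
    have e: "Clo (M \<union> F') = Clo F'" using that(1) Clo_Un by blast
    then have "M \<union> F' \<in> ?A" using that M by auto
    then have "M \<union> F' = M" using max by blast
    then show ?thesis using e by simp
  qed
  moreover have "Clo M \<subseteq> Clo F0" using M Clo_anti by blast
  ultimately show ?thesis using that M by blast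
qed

text \<open>A minimal closed subsemigroup \<open>Clo F\<close> equals \<open>Clo F \<cdot> x\<close> for each of its
  elements x, and then also the set of its elements y with \<open>y \<cdot> x = x\<close>; thus
  \<open>x \<cdot> x = x\<close>.\<close>
lemma idempotent_exists:
  assumes ne: "Clo F0 \<noteq> {}" and closed: "prod_closed (Clo F0)"
  shows "\<exists>e\<in>Clo F0. uprod e e = e"
proof -
  obtain F where F: "Clo F \<subseteq> Clo F0" "Clo F \<noteq> {}" "prod_closed (Clo F)"
    and min: "\<And>F'. Clo F' \<subseteq> Clo F \<Longrightarrow> Clo F' \<noteq> {} \<Longrightarrow> prod_closed (Clo F') \<Longrightarrow> Clo F' = Clo F"
    by (rule Clo_minimal[of F0 prod_closed, OF ne closed]) (auto simp: prod_closed_def)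
  obtain x where x: "x \<in> Clo F" using F(2) by blast
  have xU: "x \<in> Ult" using x Clo_Ult by blast
  let ?R = "{uprod y x | y. y \<in> Clo F}"
  have R: "?R = Clo {X. \<forall>y\<in>Clo F. X \<in> uprod y x}" by (rule uprod_right_image_closed[OF xU])
  have "Clo {X. \<forall>y\<in>Clo F. X \<in> uprod y x} = Clo F"
  proof (rule min; unfold R[symmetric])
    show "?R \<subseteq> Clo F" using prod_closedD[OF F(3)] x by blast
    show "?R \<noteq> {}" using x by blast
    show "prod_closed ?R" unfolding prod_closed_def
    proof (intro ballI)
      fix a b assume "a \<in> ?R" "b \<in> ?R"
      then obtain a' b' where ab: "a' \<in> Clo F" "b' \<in> Clo F" "a = uprod a' x" "b = uprod b' x"
        by blast
      have "uprod a b = uprod (uprod (uprod a' x) b') x" using ab by (simp add: uprod_assoc)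
      moreover have "uprod (uprod a' x) b' \<in> Clo F" using prod_closedD[OF F(3)] x ab by blast
      ultimately show "uprod a b \<in> ?R" by blast
    qed
  qed
  then have "x \<in> ?R" using x R by simp
  then obtain y0 where y0: "y0 \<in> Clo F" "uprod y0 x = x" by blast
  let ?F' = "F \<union> (\<lambda>X. lquot X x) ` x"
  have fixed: "Clo ?F' = {y \<in> Clo F. uprod y x = x}" by (rule uprod_fixpoints_closed[OF xU])
  have "Clo ?F' = Clo F"
  proof (rule min; unfold fixed)
    show "{y \<in> Clo F. uprod y x = x} \<subseteq> Clo F" by blast
    show "{y \<in> Clo F. uprod y x = x} \<noteq> {}" using y0 by blast
    show "prod_closed {y \<in> Clo F. uprod y x = x}"
      using prod_closedD[OF F(3)] unfolding prod_closed_def by (auto simp: uprod_assoc)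
  qed
  then have "uprod x x = x" using x fixed by auto
  then show ?thesis using x F(1) by blast
qed

lemma minimal_left_ideal:
  assumes Y: "prod_closed (Clo FY)" and r: "r \<in> Clo FY"
  obtains F where "Clo F \<subseteq> {uprod y r | y. y \<in> Clo FY}" "Clo F \<noteq> {}"
    "\<And>y l. y \<in> Clo FY \<Longrightarrow> l \<in> Clo F \<Longrightarrow> uprod y l \<in> Clo F"
    "\<And>l. l \<in> Clo F \<Longrightarrow> {uprod y l | y. y \<in> Clo FY} = Clo F"
proof -
  let ?Q = "\<lambda>S. \<forall>y\<in>Clo FY. \<forall>l\<in>S. uprod y l \<in> S"
  have left_ideal: "?Q {uprod y l | y. y \<in> Clo FY}" for l
    using prod_closedD[OF Y] by (auto simp: uprod_assoc[symmetric])
  obtain FR where FR: "{uprod y r | y. y \<in> Clo FY} = Clo FR"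
    using uprod_right_image_closed[of r FY] r Clo_Ult by blast
  have "Clo FR \<noteq> {}" using r FR by blast
  then obtain F where F: "Clo F \<subseteq> Clo FR" "Clo F \<noteq> {}" "?Q (Clo F)"
    and min: "\<And>F'. Clo F' \<subseteq> Clo F \<Longrightarrow> Clo F' \<noteq> {} \<Longrightarrow> ?Q (Clo F') \<Longrightarrow> Clo F' = Clo F"
    by (rule Clo_minimal[of FR ?Q]) (use left_ideal[of r] FR in auto)
  have "{uprod y l | y. y \<in> Clo FY} = Clo F" if l: "l \<in> Clo F" for l
  proof -
    obtain FL where FL: "{uprod y l | y. y \<in> Clo FY} = Clo FL"
      using uprod_right_image_closed[of l FY] l Clo_Ult by blast
    have "Clo FL = Clo F"
    proof (rule min; unfold FL[symmetric])
      show "{uprod y l | y. y \<in> Clo FY} \<subseteq> Clo F" using F(3) l by blast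
      show "{uprod y l | y. y \<in> Clo FY} \<noteq> {}" using r by blast
      show "?Q {uprod y l | y. y \<in> Clo FY}" by (rule left_ideal)
    qed
    then show ?thesis using FL by simp
  qed
  note minimal = this
  show ?thesis
  proof (rule that[of F])
    show "Clo F \<subseteq> {uprod y r | y. y \<in> Clo FY}" using F(1) FR by simp
  next
    show "Clo F \<noteq> {}" by (rule F(2))
  next
    fix y l assume "y \<in> Clo FY" "l \<in> Clo F"
    then show "uprod y l \<in> Clo F" using F(3) by blast
  next
    fix l assume "l \<in> Clo F"
    then show "{uprod y l | y. y \<in> Clo FY} = Clo F" by (rule minimal)
  qed
qed

end

text \<open>Located words: lists of pairs (position, letter), the letter being \<open>None\<close> for the
  variable, with strictly increasing positions.  A located word t stands for the word
  obtained by concatenating the \<open>t\<close>-prescribed substitution instances of the members of a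
  fixed sequence of variable words; working with located words makes the combinatorics
  independent of that sequence.\<close>
definition Located :: "'a set \<Rightarrow> (nat \<times> 'a option) list set" where
  "Located A = {ps. ps \<noteq> [] \<and> sorted_wrt (<) (map fst ps)
     \<and> set (map snd ps) \<subseteq> insert None (Some ` A)}"

definition Above :: "nat \<Rightarrow> (nat \<times> 'a option) list set" where
  "Above n = {ps. \<forall>l\<in>set (map fst ps). n < l}"

definition Const :: "(nat \<times> 'a option) list set" where
  "Const = {ps. None \<notin> set (map snd ps)}"

definition Var :: "(nat \<times> 'a option) list set" where
  "Var = {ps. None \<in> set (map snd ps)}"

definition maxpos :: "(nat \<times> 'b) list \<Rightarrow> nat" where
  "maxpos ps = Max (insert 0 (set (map fst ps)))"

definition located_family :: "'a set \<Rightarrow> (nat \<times> 'a option) list set set" where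
  "located_family A = insert (Located A) (range Above)"

lemma Above_inj: "inj (Above :: nat \<Rightarrow> (nat \<times> 'a option) list set)"
proof (rule injI)
  fix m n assume eq: "(Above m :: (nat \<times> 'a option) list set) = Above n"
  have "[(Suc m, None)] \<in> (Above m :: (nat \<times> 'a option) list set)"
    "[(Suc n, None)] \<in> (Above n :: (nat \<times> 'a option) list set)"
    unfolding Above_def by auto
  then have "[(Suc m, None)] \<in> (Above n :: (nat \<times> 'a option) list set)"
    "[(Suc n, None)] \<in> (Above m :: (nat \<times> 'a option) list set)"
    using eq by auto
  then show "m = n" unfolding Above_def by auto
qed

lemma Above_bounded:
  assumes "finite H"
  shows "\<exists>N. \<forall>n. (Above n :: (nat \<times> 'a option) list set) \<in> H \<longrightarrow> n \<le> N"
proof -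
  have "finite (Above -` H :: nat set)" by (rule finite_vimageI[OF assms Above_inj])
  then show ?thesis by (auto simp: finite_nat_set_iff_bounded_le)
qed

definition subst :: "'a \<Rightarrow> (nat \<times> 'a option) list \<Rightarrow> (nat \<times> 'a option) list" where
  "subst a ps = map (\<lambda>(l, b). (l, Some (case b of None \<Rightarrow> a | Some c \<Rightarrow> c))) ps"

lemma maxpos_ge: "l \<in> set (map fst ps) \<Longrightarrow> l \<le> maxpos ps"
  unfolding maxpos_def by (simp add: Max_ge_iff)

lemma Above_mono: "m \<le> n \<Longrightarrow> Above n \<subseteq> Above m"
  unfolding Above_def by auto

lemma Above_append: "x \<in> Above n \<Longrightarrow> y \<in> Above n \<Longrightarrow> x @ y \<in> Above n"
  unfolding Above_def by auto

lemma Located_append: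
  assumes x: "x \<in> Located A" and y: "y \<in> Located A" "y \<in> Above (maxpos x)"
  shows "x @ y \<in> Located A"
proof -
  have "p < q" if "p \<in> set (map fst x)" "q \<in> set (map fst y)" for p q
    using maxpos_ge[OF that(1)] that(2) y(2) unfolding Above_def by fastforce
  then show ?thesis using x y(1) unfolding Located_def by (auto simp: sorted_wrt_append)
qed

lemma subst_append: "subst a (x @ y) = subst a x @ subst a y"
  by (simp add: subst_def)

lemma subst_fst: "map fst (subst a ps) = map fst ps"
  by (induction ps) (auto simp: subst_def)

lemma subst_Const: "subst a ps \<in> Const"
  unfolding subst_def Const_def by auto

lemma subst_id: "ps \<in> Const \<Longrightarrow> subst a ps = ps"
  unfolding subst_def Const_def by (induction ps) (auto split: option.splits)

lemma subst_Located: "a \<in> A \<Longrightarrow> ps \<in> Located A \<Longrightarrow> subst a ps \<in> Located A"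
  unfolding Located_def by (auto simp: subst_fst) (auto simp: subst_def split: option.splits)

lemma subst_Above: "ps \<in> Above n \<Longrightarrow> subst a ps \<in> Above n"
  unfolding Above_def subst_def by auto

text \<open>The ultrafilters containing \<open>located_family A\<close> are closed under products: a located
  word x is continued by every located word above its last position.\<close>
lemma located_family_uprod:
  assumes u: "ultrafilter u" and v: "ultrafilter v"
    and Bu: "located_family A \<subseteq> u" and Bv: "located_family A \<subseteq> v"
  shows "located_family A \<subseteq> uprod u v"
proof -
  have "Located A \<in> uprod u v"
  proof (rule uprod_memI[OF u])
    show "Located A \<in> u" using Bu unfolding located_family_def by blast
  next
    fix x assume x: "x \<in> Located A"
    have "Located A \<inter> Above (maxpos x) \<in> v"
      using Bv ultrafilter_Int[OF v] unfolding located_family_def by blast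
    moreover have "Located A \<inter> Above (maxpos x) \<subseteq> {y. x @ y \<in> Located A}"
      using Located_append[OF x] by blast
    ultimately show "{y. x @ y \<in> Located A} \<in> v" using ultrafilter_mono[OF v] by blast
  qed
  moreover have "Above n \<in> uprod u v" for n
  proof (rule uprod_memI[OF u])
    show "Above n \<in> u" using Bu unfolding located_family_def by blast
  next
    fix x :: "(nat \<times> 'a option) list" assume "x \<in> Above n"
    then have "Above n \<subseteq> {y. x @ y \<in> Above n}" using Above_append by blast
    moreover have "Above n \<in> v" using Bv unfolding located_family_def by blast
    ultimately show "{y. x @ y \<in> Above n} \<in> v" using ultrafilter_mono[OF v] by blast
  qed
  ultimately show ?thesis unfolding located_family_def by blast
qed

locale located_words =
  fixes A :: "'a set"
  assumes A_finite: "finite A" and A_nonempty: "A \<noteq> {}"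
begin

sublocale closed_ultrafilters "located_family A"
  by unfold_locales (rule located_family_uprod)

lemma Ult_family: "U \<in> Ult \<Longrightarrow> located_family A \<subseteq> U"
  by (simp add: Ult_def)

lemma Ult_Located: "U \<in> Ult \<Longrightarrow> Located A \<in> U"
  using Ult_family unfolding located_family_def by blast

lemma Ult_Above: "U \<in> Ult \<Longrightarrow> Above n \<in> U"
  using Ult_family unfolding located_family_def by blast

lemma Clo_singleton_nonempty:
  assumes meets: "\<And>n. \<exists>ps. ps \<in> Located A \<and> ps \<in> P \<and> ps \<in> Above n"
  shows "Clo {P} \<noteq> {}"
proof -
  have "fip (located_family A \<union> {P})" unfolding fip_def
  proof (intro allI impI)
    fix H assume H: "finite H" "H \<subseteq> located_family A \<union> {P}"
    obtain N where N: "\<And>n. Above n \<in> H \<Longrightarrow> n \<le> N" using Above_bounded[OF H(1)] by blast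
    obtain ps where ps: "ps \<in> Located A" "ps \<in> P" "ps \<in> Above N" using meets by blast
    have "ps \<in> X" if X: "X \<in> H" for X
    proof -
      consider "X = Located A" | "X = P" | n where "X = Above n" "Above n \<in> H"
        using H(2) X unfolding located_family_def by auto
      then show ?thesis
      proof cases
        case 3
        then show ?thesis using ps(3) N[OF 3(2)] Above_mono by blast
      qed (use ps in auto)
    qed
    then show "\<Inter>H \<noteq> {}" by blast
  qed
  then obtain U where "ultrafilter U" "located_family A \<union> {P} \<subseteq> U"
    using fip_ultrafilter by blast
  then have "U \<in> Clo {P}" unfolding Clo_def Ult_def by blast
  then show ?thesis by blast
qed

lemma Clo_Const_nonempty: "Clo {Const} \<noteq> {}"
proof (rule Clo_singleton_nonempty)
  fix n
  obtain a where "a \<in> A" using A_nonempty by blast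
  then show "\<exists>ps. ps \<in> Located A \<and> ps \<in> Const \<and> ps \<in> Above n"
    by (intro exI[of _ "[(Suc n, Some a)]"]) (auto simp: Located_def Const_def Above_def)
qed

lemma Clo_Var_nonempty: "Clo {Var} \<noteq> {}"
proof (rule Clo_singleton_nonempty)
  fix n
  show "\<exists>ps. ps \<in> Located A \<and> ps \<in> Var \<and> ps \<in> Above n"
    by (intro exI[of _ "[(Suc n, None)]"]) (auto simp: Located_def Var_def Above_def)
qed

lemma Clo_Const_prod_closed: "prod_closed (Clo {Const})"
  unfolding prod_closed_def
proof (intro ballI)
  fix u v assume u: "u \<in> Clo {Const}" and v: "v \<in> Clo {Const}"
  have "Const \<in> uprod u v"
  proof (rule uprod_memI[OF Clo_ultrafilter[OF u]])
    show "Const \<in> u" using u unfolding Clo_def by blast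
  next
    fix x :: "(nat \<times> 'a option) list" assume "x \<in> Const"
    then have "Const \<subseteq> {y. x @ y \<in> Const}" unfolding Const_def by auto
    moreover have "Const \<in> v" using v unfolding Clo_def by blast
    ultimately show "{y. x @ y \<in> Const} \<in> v"
      using ultrafilter_mono[OF Clo_ultrafilter[OF v]] by blast
  qed
  moreover have "uprod u v \<in> Ult" using Ult_uprod u v Clo_Ult by blast
  ultimately show "uprod u v \<in> Clo {Const}" unfolding Clo_def by blast
qed

lemma Var_uprod_left: "u \<in> Ult \<Longrightarrow> v \<in> Ult \<Longrightarrow> Var \<in> u \<Longrightarrow> Var \<in> uprod u v"
proof (rule uprod_memI[of u Var])
  fix x :: "(nat \<times> 'a option) list"
  assume "v \<in> Ult" "x \<in> Var"
  then have "{y. x @ y \<in> Var} = UNIV" unfolding Var_def by auto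
  then show "{y. x @ y \<in> Var} \<in> v" using \<open>v \<in> Ult\<close> Ult_ultrafilter ultrafilter_UNIV by metis
qed (auto simp: Ult_ultrafilter)

lemma Var_uprod_right: "u \<in> Ult \<Longrightarrow> v \<in> Ult \<Longrightarrow> Var \<in> v \<Longrightarrow> Var \<in> uprod u v"
proof (rule uprod_memI[of u UNIV])
  fix x :: "(nat \<times> 'a option) list"
  assume "v \<in> Ult" "Var \<in> v"
  moreover have "Var \<subseteq> {y. x @ y \<in> Var}" unfolding Var_def by auto
  ultimately show "{y. x @ y \<in> Var} \<in> v" by (meson ultrafilter_mono Ult_ultrafilter)
qed (auto simp: Ult_ultrafilter ultrafilter_UNIV)

lemma umap_subst_Ult:
  assumes a: "a \<in> A" and U: "U \<in> Ult"
  shows "umap (subst a) U \<in> Clo {Const}"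
proof -
  have U_ultra: "ultrafilter U" using U Ult_ultrafilter by blast
  have "X \<in> umap (subst a) U" if X: "X \<in> located_family A" for X
  proof -
    have "X \<subseteq> subst a -` X"
    proof (cases "X = Located A")
      case True
      then show ?thesis using subst_Located[OF a] by blast
    next
      case False
      with X obtain n where "X = Above n" unfolding located_family_def by auto
      then show ?thesis by (auto intro: subst_Above)
    qed
    moreover have "X \<in> U" using Ult_family[OF U] X by blast
    ultimately have "subst a -` X \<in> U" using ultrafilter_mono[OF U_ultra] by blast
    then show ?thesis by (simp add: umap_def)
  qed
  moreover have "subst a -` Const = UNIV" by (auto simp: subst_Const)
  then have "Const \<in> umap (subst a) U" using ultrafilter_UNIV[OF U_ultra] by (simp add: umap_def)
  moreover have "ultrafilter (umap (subst a) U)" by (rule umap_ultrafilter[OF U_ultra])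
  ultimately show ?thesis unfolding Clo_def Ult_def by blast
qed

lemma umap_subst_Const:
  assumes U: "U \<in> Clo {Const}"
  shows "umap (subst a) U = U"
proof -
  have U_ultra: "ultrafilter U" using U Clo_ultrafilter by blast
  have sub: "U \<subseteq> umap (subst a) U"
  proof
    fix X assume "X \<in> U"
    moreover have "Const \<in> U" using U unfolding Clo_def by blast
    ultimately have "X \<inter> Const \<in> U" using ultrafilter_Int[OF U_ultra] by blast
    moreover have "X \<inter> Const \<subseteq> subst a -` X" by (auto simp: subst_id)
    ultimately have "subst a -` X \<in> U" using ultrafilter_mono[OF U_ultra] by blast
    then show "X \<in> umap (subst a) U" by (simp add: umap_def)
  qed
  show ?thesis by (rule sym, rule ultrafilter_eq[OF U_ultra umap_ultrafilter[OF U_ultra] sub])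
qed

end

context located_words
begin

lemma minimal_idempotent_Const:
  obtains L p where "Clo L \<subseteq> Clo {Const}"
    "\<And>y l. y \<in> Clo {Const} \<Longrightarrow> l \<in> Clo L \<Longrightarrow> uprod y l \<in> Clo L"
    "\<And>l. l \<in> Clo L \<Longrightarrow> {uprod y l | y. y \<in> Clo {Const}} = Clo L"
    "p \<in> Clo L" "uprod p p = p"
proof -
  obtain r where r: "r \<in> Clo {Const}" using Clo_Const_nonempty by blast
  obtain L where L: "Clo L \<subseteq> {uprod y r | y. y \<in> Clo {Const}}" "Clo L \<noteq> {}"
    and ideal: "\<And>y l. y \<in> Clo {Const} \<Longrightarrow> l \<in> Clo L \<Longrightarrow> uprod y l \<in> Clo L"
    and minimal: "\<And>l. l \<in> Clo L \<Longrightarrow> {uprod y l | y. y \<in> Clo {Const}} = Clo L"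
    using minimal_left_ideal[OF Clo_Const_prod_closed r] by blast
  have sub: "Clo L \<subseteq> Clo {Const}"
    using L(1) prod_closedD[OF Clo_Const_prod_closed _ r] by blast
  have "prod_closed (Clo L)" unfolding prod_closed_def using ideal sub by blast
  then obtain p where "p \<in> Clo L" "uprod p p = p" using idempotent_exists[OF L(2)] by blast
  then show ?thesis using that[OF sub ideal minimal] by blast
qed

text \<open>Below every idempotent p there is an idempotent q (i.e. \<open>p \<cdot> q = q \<cdot> p = q\<close>) that
  contains the located words with a variable: take q in a minimal left ideal of \<open>Ult\<close>;
  such an ideal is generated by any of its elements, in particular by one of the form
  \<open>v \<cdot> q\<close> with \<open>Var \<in> v\<close>.\<close>
lemma idempotent_Var_below:
  assumes p: "p \<in> Ult" "uprod p p = p"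
  obtains q where "q \<in> Clo {Var}" "uprod q q = q" "uprod q p = q" "uprod p q = q"
proof -
  have Ult_closed: "prod_closed (Clo {})" unfolding prod_closed_def Clo_empty using Ult_uprod by blast
  obtain L where L: "Clo L \<subseteq> {uprod y p | y. y \<in> Clo {}}" "Clo L \<noteq> {}"
    and ideal: "\<And>y l. y \<in> Clo {} \<Longrightarrow> l \<in> Clo L \<Longrightarrow> uprod y l \<in> Clo L"
    and minimal: "\<And>l. l \<in> Clo L \<Longrightarrow> {uprod y l | y. y \<in> Clo {}} = Clo L"
    using minimal_left_ideal[OF Ult_closed, of p] p(1) Clo_empty by blast
  have L_Ult: "Clo L \<subseteq> Ult" by (rule Clo_Ult)
  have "prod_closed (Clo L)" unfolding prod_closed_def using ideal L_Ult Clo_empty by blast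
  then obtain q' where q': "q' \<in> Clo L" "uprod q' q' = q'" using idempotent_exists[OF L(2)] by blast
  obtain r where "q' = uprod r p" using q'(1) L(1) by blast
  then have q'p: "uprod q' p = q'" using p(2) by (simp add: uprod_assoc)
  define q where "q = uprod p q'"
  have qL: "q \<in> Clo L" unfolding q_def using ideal p(1) q'(1) Clo_empty by blast
  have qq: "uprod q q = q" unfolding q_def by (metis uprod_assoc q'(2) q'p)
  have qp: "uprod q p = q" unfolding q_def by (simp add: uprod_assoc q'p)
  have pq: "uprod p q = q" unfolding q_def by (simp add: uprod_assoc[symmetric] p(2))
  obtain v where v: "v \<in> Clo {Var}" using Clo_Var_nonempty by blast
  have vU: "v \<in> Ult" and Var_v: "Var \<in> v" using v unfolding Clo_def by auto
  have wL: "uprod v q \<in> Clo L" using ideal vU qL Clo_empty by blast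
  have "Var \<in> uprod v q" using Var_uprod_left vU qL L_Ult Var_v by blast
  moreover have "q \<in> {uprod y (uprod v q) | y. y \<in> Clo {}}" using minimal[OF wL] qL by blast
  then obtain y where "y \<in> Ult" "q = uprod y (uprod v q)" using Clo_empty by blast
  ultimately have "Var \<in> q" using Var_uprod_right wL L_Ult by (metis subsetD)
  then have "q \<in> Clo {Var}" using qL L_Ult unfolding Clo_def by blast
  then show ?thesis using that qq qp pq by blast
qed

text \<open>The idempotent pair behind the Hales--Jewett theorem: an idempotent p of the constant
  part and an ultrafilter q of located words with a variable such that every substitution of a
  letter maps q to p.  The image e of q is idempotent with \<open>e \<cdot> p = p \<cdot> e = e\<close>; it lies in
  the minimal left ideal L of p, so \<open>p = y \<cdot> e\<close> for some y and hence \<open>p = p \<cdot> e = e\<close>.\<close>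
lemma idempotent_pair:
  obtains p q where "p \<in> Clo {Const}" "uprod p p = p" "q \<in> Clo {Var}"
    "\<And>a. a \<in> A \<Longrightarrow> umap (subst a) q = p"
proof -
  obtain L p where sub: "Clo L \<subseteq> Clo {Const}"
    and ideal: "\<And>y l. y \<in> Clo {Const} \<Longrightarrow> l \<in> Clo L \<Longrightarrow> uprod y l \<in> Clo L"
    and minimal: "\<And>l. l \<in> Clo L \<Longrightarrow> {uprod y l | y. y \<in> Clo {Const}} = Clo L"
    and p: "p \<in> Clo L" "uprod p p = p"
    using minimal_idempotent_Const by blast
  have pC: "p \<in> Clo {Const}" using p(1) sub by blast
  obtain q where q: "q \<in> Clo {Var}" "uprod q q = q" "uprod q p = q" "uprod p q = q"
    using idempotent_Var_below[of p] pC Clo_Ult p(2) by blast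
  have qU: "q \<in> Ult" using q(1) Clo_Ult by blast
  have "umap (subst a) q = p" if a: "a \<in> A" for a
  proof -
    define e where "e = umap (subst a) q"
    have eC: "e \<in> Clo {Const}" unfolding e_def by (rule umap_subst_Ult[OF a qU])
    have hom: "umap (subst a) (uprod u v) = uprod (umap (subst a) u) (umap (subst a) v)" for u v
      by (rule umap_uprod) (simp add: subst_append)
    have p_fixed: "umap (subst a) p = p" by (rule umap_subst_Const[OF pC])
    have ee: "uprod e e = e" unfolding e_def by (metis hom q(2))
    have ep: "uprod e p = e" unfolding e_def by (metis hom q(3) p_fixed)
    have pe: "uprod p e = e" unfolding e_def by (metis hom q(4) p_fixed)
    have "e \<in> Clo L" using ideal[OF eC p(1)] ep by simp
    then have "p \<in> {uprod y e | y. y \<in> Clo {Const}}" using minimal p(1) by blast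
    then obtain y where "p = uprod y e" by blast
    then have "uprod p e = p" using ee by (simp add: uprod_assoc)
    then show ?thesis using pe unfolding e_def by simp
  qed
  then show ?thesis using that pC p(2) q(1) by blast
qed

end

locale idempotent_pair_setting = located_words A for A :: "'a set" +
  fixes p q :: "(nat \<times> 'a option) list set set"
  assumes p_Const: "p \<in> Clo {Const}" and p_idem: "uprod p p = p" and q_Var: "q \<in> Clo {Var}"
    and q_subst: "\<And>a. a \<in> A \<Longrightarrow> umap (subst a) q = p"
begin

lemma p_ultrafilter: "ultrafilter p"
  using p_Const Clo_ultrafilter by blast

lemma q_ultrafilter: "ultrafilter q"
  using q_Var Clo_ultrafilter by blast

text \<open>For B in p, the star of B consists of those x in B after which p-almost every word
  continues inside B; it is again in p and is inherited by its own continuations.  This is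
  the usual consequence of idempotency.\<close>
definition star :: "(nat \<times> 'a option) list set \<Rightarrow> (nat \<times> 'a option) list set" where
  "star B = {x \<in> B. {y. x @ y \<in> B} \<in> p}"

lemma star_subset: "star B \<subseteq> B"
  unfolding star_def by blast

lemma lquot_p: "B \<in> p \<Longrightarrow> lquot B p \<in> p"
  using p_idem uprod_iff by metis

lemma star_mem: "B \<in> p \<Longrightarrow> star B \<in> p"
proof -
  assume B: "B \<in> p"
  have "star B = B \<inter> lquot B p" unfolding star_def lquot_def by blast
  then show ?thesis using ultrafilter_Int[OF p_ultrafilter B lquot_p[OF B]] by simp
qed

lemma star_continuations: "x \<in> star B \<Longrightarrow> {y. x @ y \<in> star B} \<in> p"
proof -
  assume x: "x \<in> star B"
  define C where "C = {y. x @ y \<in> B}"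
  have C: "C \<in> p" using x unfolding star_def C_def by blast
  have "{y. x @ y \<in> star B} = C \<inter> lquot C p" unfolding star_def C_def lquot_def by auto
  then show ?thesis using ultrafilter_Int[OF p_ultrafilter C lquot_p[OF C]] by simp
qed

definition admissible :: "(nat \<times> 'a option) list set \<Rightarrow> nat \<Rightarrow> (nat \<times> 'a option) list \<Rightarrow> bool" where
  "admissible B N t \<longleftrightarrow> t \<in> Var \<and> t \<in> Located A \<and> t \<in> Above N \<and> (\<forall>a\<in>A. subst a t \<in> star B)"

text \<open>Admissible words exist since all requirements are members of the ultrafilter q.\<close>
lemma admissible_exists:
  assumes B: "B \<in> p"
  shows "\<exists>t. admissible B N t"
proof -
  have "(\<Inter>a\<in>A. subst a -` star B) \<in> q"
  proof (rule ultrafilter_INT[OF q_ultrafilter A_finite])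
    fix a assume "a \<in> A"
    then have "star B \<in> umap (subst a) q" using q_subst star_mem[OF B] by simp
    then show "subst a -` star B \<in> q" by (simp add: umap_def)
  qed
  moreover have "Var \<in> q" using q_Var unfolding Clo_def by blast
  moreover have "q \<in> Ult" using q_Var Clo_Ult by blast
  then have "Located A \<in> q" "Above N \<in> q" using Ult_Located Ult_Above by auto
  ultimately have "Var \<inter> Located A \<inter> Above N \<inter> (\<Inter>a\<in>A. subst a -` star B) \<in> q"
    using ultrafilter_Int[OF q_ultrafilter] by simp
  then obtain t where "t \<in> Var \<inter> Located A \<inter> Above N \<inter> (\<Inter>a\<in>A. subst a -` star B)"
    using ultrafilter_nonempty[OF q_ultrafilter] by blast
  then show ?thesis unfolding admissible_def by blast
qed

definition refine :: "(nat \<times> 'a option) list set \<Rightarrow> (nat \<times> 'a option) list \<Rightarrow> (nat \<times> 'a option) list set" where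
  "refine B t = star B \<inter> (\<Inter>a\<in>A. {y. subst a t @ y \<in> star B})"

lemma refine_mem:
  assumes "B \<in> p" "admissible B N t"
  shows "refine B t \<in> p"
proof -
  have "(\<Inter>a\<in>A. {y. subst a t @ y \<in> star B}) \<in> p"
    by (rule ultrafilter_INT[OF p_ultrafilter A_finite])
      (use assms(2) star_continuations in \<open>auto simp: admissible_def\<close>)
  then show ?thesis unfolding refine_def using ultrafilter_Int[OF p_ultrafilter star_mem[OF assms(1)]]
    by simp
qed

text \<open>The recursive construction: stage n consists of a set \<open>B\<^sub>n \<in> p\<close> and an admissible
  word \<open>t\<^sub>n\<close> for it located beyond \<open>t\<^sub>n\<^sub>-\<^sub>1\<close>; then \<open>B\<^sub>n\<^sub>+\<^sub>1 = refine B\<^sub>n t\<^sub>n\<close>.\<close>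
definition pick :: "(nat \<times> 'a option) list set \<Rightarrow> nat \<Rightarrow> (nat \<times> 'a option) list" where
  "pick B N = (SOME t. admissible B N t)"

primrec stage :: "(nat \<times> 'a option) list set \<Rightarrow> nat \<Rightarrow> (nat \<times> 'a option) list set \<times> (nat \<times> 'a option) list" where
  "stage K 0 = (K, pick K 0)"
| "stage K (Suc n) =
    (let B = refine (fst (stage K n)) (snd (stage K n)) in (B, pick B (maxpos (snd (stage K n)))))"

definition stage_set :: "(nat \<times> 'a option) list set \<Rightarrow> nat \<Rightarrow> (nat \<times> 'a option) list set" where
  "stage_set K n = fst (stage K n)"

definition stage_word :: "(nat \<times> 'a option) list set \<Rightarrow> nat \<Rightarrow> (nat \<times> 'a option) list" where
  "stage_word K n = snd (stage K n)"

lemma stage_set_0: "stage_set K 0 = K"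
  unfolding stage_set_def by simp

lemma stage_set_Suc: "stage_set K (Suc n) = refine (stage_set K n) (stage_word K n)"
  unfolding stage_set_def stage_word_def by (simp add: Let_def)

lemma stage_invariant:
  assumes K: "K \<in> p"
  shows "stage_set K n \<in> p \<and>
    admissible (stage_set K n) (case n of 0 \<Rightarrow> 0 | Suc m \<Rightarrow> maxpos (stage_word K m)) (stage_word K n)"
proof (induction n)
  case 0
  have "admissible K 0 (pick K 0)" unfolding pick_def using someI_ex[OF admissible_exists[OF K]] .
  then show ?case using K by (simp add: stage_set_def stage_word_def)
next
  case (Suc n)
  let ?B = "refine (stage_set K n) (stage_word K n)"
  have B: "?B \<in> p" using Suc refine_mem by blast
  have "admissible ?B (maxpos (stage_word K n)) (pick ?B (maxpos (stage_word K n)))"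
    unfolding pick_def using someI_ex[OF admissible_exists[OF B]] .
  then show ?case using B by (simp add: stage_set_def stage_word_def Let_def)
qed

lemma stage_set_anti: "m \<le> n \<Longrightarrow> stage_set K n \<subseteq> stage_set K m"
proof (induction n rule: dec_induct)
  case (step n)
  have "stage_set K (Suc n) \<subseteq> stage_set K n"
    unfolding stage_set_Suc refine_def using star_subset by blast
  then show ?case using step.IH by blast
qed simp

lemma stage_word_Var: "K \<in> p \<Longrightarrow> stage_word K n \<in> Var"
  using stage_invariant unfolding admissible_def by blast

lemma stage_word_Located: "K \<in> p \<Longrightarrow> stage_word K n \<in> Located A"
  using stage_invariant unfolding admissible_def by blast

lemma stage_word_Above: "K \<in> p \<Longrightarrow> stage_word K (Suc n) \<in> Above (maxpos (stage_word K n))"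
  using stage_invariant[of K "Suc n"] unfolding admissible_def by simp

lemma stage_word_star: "K \<in> p \<Longrightarrow> a \<in> A \<Longrightarrow> subst a (stage_word K n) \<in> star (stage_set K n)"
  using stage_invariant unfolding admissible_def by blast

lemma stage_products_mem:
  assumes K: "K \<in> p"
  shows "ps \<noteq> [] \<Longrightarrow> sorted_wrt (<) (map fst ps) \<Longrightarrow> set (map snd ps) \<subseteq> A \<Longrightarrow>
    concat (map (\<lambda>(l, a). subst a (stage_word K l)) ps) \<in> stage_set K (fst (hd ps))"
proof (induction ps)
  case (Cons x rest)
  obtain l a where x: "x = (l, a)" by (cases x)
  have a: "a \<in> A" using Cons.prems x by simp
  have st: "subst a (stage_word K l) \<in> star (stage_set K l)" by (rule stage_word_star[OF K a])
  show ?case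
  proof (cases "rest = []")
    case True
    then show ?thesis using st star_subset x by auto
  next
    case False
    have rest: "concat (map (\<lambda>(l, a). subst a (stage_word K l)) rest) \<in> stage_set K (fst (hd rest))"
      using Cons False by simp
    have "l < fst (hd rest)" using Cons.prems(2) False x by (cases rest) auto
    then have "stage_set K (fst (hd rest)) \<subseteq> stage_set K (Suc l)" using stage_set_anti by simp
    also have "\<dots> \<subseteq> {y. subst a (stage_word K l) @ y \<in> star (stage_set K l)}"
      unfolding stage_set_Suc refine_def using a by blast
    finally show ?thesis using rest x star_subset by auto
  qed
qed simp

end

lemma csubst_vsubst: "csubst (vsubst w b) a = csubst w (case b of None \<Rightarrow> a | Some c \<Rightarrow> c)"
  unfolding csubst_def vsubst_def by (induction w) (auto split: option.splits)

lemma csubst_concat: "csubst (concat ws) a = concat (map (\<lambda>w. csubst w a) ws)"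
  unfolding csubst_def by (simp add: map_concat)

lemma vsubst_None: "vsubst w None = w"
  unfolding vsubst_def by (induction w) (auto split: option.splits)

lemma cspan_mono: "I \<subseteq> J \<Longrightarrow> cspan A w I \<subseteq> cspan A w J"
  unfolding cspan_def by blast

lemma cspanI:
  assumes "ps \<noteq> []" "sorted_wrt (<) (map fst ps)" "set (map fst ps) \<subseteq> I" "set (map snd ps) \<subseteq> A"
  shows "concat (map (\<lambda>(l, a). csubst (w l) a) ps) \<in> cspan A w I"
  unfolding cspan_def using assms by blast

lemma cspan_append:
  assumes g: "g \<in> cspan A w I" and z: "z \<in> cspan A w J" and before: "\<forall>i\<in>I. \<forall>j\<in>J. i < j"
  shows "g @ z \<in> cspan A w (I \<union> J)"
proof -
  obtain rs where rs: "g = concat (map (\<lambda>(l, a). csubst (w l) a) rs)" "rs \<noteq> []"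
    "sorted_wrt (<) (map fst rs)" "set (map fst rs) \<subseteq> I" "set (map snd rs) \<subseteq> A"
    using g unfolding cspan_def by blast
  obtain qs where qs: "z = concat (map (\<lambda>(l, a). csubst (w l) a) qs)"
    "sorted_wrt (<) (map fst qs)" "set (map fst qs) \<subseteq> J" "set (map snd qs) \<subseteq> A"
    using z unfolding cspan_def by blast
  have "sorted_wrt (<) (map fst (rs @ qs))"
    unfolding map_append sorted_wrt_append using rs(3,4) qs(2,3) before by blast
  then have "concat (map (\<lambda>(l, a). csubst (w l) a) (rs @ qs)) \<in> cspan A w (I \<union> J)"
    by (rule cspanI[rotated]) (use rs(2,4,5) qs(3,4) in auto)
  then show ?thesis using rs(1) qs(1) by simp
qed

lemma vspan_tail_csubst:
  assumes t: "t \<in> vspan A (\<lambda>i. w (k + i)) I" and a: "a \<in> A"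
  shows "csubst t a \<in> cspan A w {k..}"
proof -
  obtain ps where ps: "t = concat (map (\<lambda>(l, b). vsubst (w (k + l)) b) ps)" "ps \<noteq> []"
    "sorted_wrt (<) (map fst ps)" "set (map snd ps) \<subseteq> insert None (Some ` A)"
    using t unfolding vspan_def by blast
  define f where "f = (\<lambda>b. case b of None \<Rightarrow> a | Some c \<Rightarrow> c)"
  define qs where "qs = map (\<lambda>(l, b). (k + l, f b)) ps"
  have "csubst t a = concat (map (\<lambda>(l, c). csubst (w l) c) qs)"
    unfolding ps(1) qs_def csubst_concat by (simp add: csubst_vsubst f_def case_prod_beta o_def)
  moreover have "map fst qs = map (\<lambda>l. k + l) (map fst ps)"
    unfolding qs_def by (simp add: case_prod_beta o_def)
  then have "sorted_wrt (<) (map fst qs)" "set (map fst qs) \<subseteq> {k..}"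
    using ps(3) by (auto simp: sorted_wrt_map)
  moreover have "set (map snd qs) \<subseteq> A"
    using ps(4) a unfolding qs_def f_def by (auto split: option.splits)
  moreover have "qs \<noteq> []" using ps(2) unfolding qs_def by simp
  ultimately show ?thesis using cspanI by metis
qed

text \<open>If the whole constant span of w lies in E, then \<open>E \<inter> E\<^sub>F\<^sub>n\<close> is large in every tail:
  the constant instances of the first word of an extracted subsequence of the tail belong to
  the constant span of w beyond n, and can be prefixed by every member of \<open>F\<^sub>n\<close>.\<close>
lemma span_subset_large:
  assumes A: "A \<noteq> {}" and EA: "E \<subseteq> lists A" and span: "cspan A w UNIV \<subseteq> E"
  shows "large A (E \<inter> shiftset A E (cspan A w {0..n})) (\<lambda>i. w (n + 1 + i))"
  unfolding large_def
proof (intro allI impI)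
  fix u assume u: "var_seq A u \<and> extracted A u (\<lambda>i. w (n + 1 + i))"
  obtain m :: "nat \<Rightarrow> nat" where "u 0 \<in> vspan A (\<lambda>i. w (n + 1 + i)) {m 0..<m (Suc 0)}"
    using u unfolding extracted_def by (metis le_refl)
  moreover obtain a where a: "a \<in> A" using A by blast
  ultimately have z_tail: "csubst (u 0) a \<in> cspan A w {n + 1..}" by (rule vspan_tail_csubst)
  have z_u: "csubst (u 0) a \<in> cspan A u UNIV"
    using cspanI[of "[(0, a)]" UNIV A u] a by simp
  have z_E: "csubst (u 0) a \<in> E" using z_tail cspan_mono[of "{n + 1..}" UNIV] span by blast
  have "g @ csubst (u 0) a \<in> E" if "g \<in> cspan A w {0..n}" for g
    using cspan_append[OF that z_tail] cspan_mono[of "{0..n} \<union> {n + 1..}" UNIV] span by auto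
  then have "csubst (u 0) a \<in> shiftset A E (cspan A w {0..n})"
    using z_E EA unfolding shiftset_def by blast
  then show "(E \<inter> shiftset A E (cspan A w {0..n})) \<inter> cspan A u UNIV \<noteq> {}" using z_E z_u by blast
qed

definition realize :: "(nat \<Rightarrow> 'a option list) \<Rightarrow> (nat \<times> 'a option) list \<Rightarrow> 'a option list" where
  "realize s t = concat (map (\<lambda>(l, b). vsubst (s l) b) t)"

definition realize_const :: "(nat \<Rightarrow> 'a option list) \<Rightarrow> (nat \<times> 'a option) list \<Rightarrow> 'a list" where
  "realize_const s t = concat (map (\<lambda>(l, b). csubst (s l) (the b)) t)"

lemma realize_const_concat: "realize_const s (concat ts) = concat (map (realize_const s) ts)"
  unfolding realize_const_def by (induction ts) simp_all

lemma csubst_realize: "csubst (realize s t) a = realize_const s (subst a t)"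
  unfolding realize_def realize_const_def subst_def csubst_concat
  by (simp add: csubst_vsubst case_prod_beta o_def)

lemma realize_var_word:
  assumes s: "var_seq A s" and t: "t \<in> Located A" "t \<in> Var"
  shows "var_word A (realize s t)"
proof -
  have letters: "set (s l) \<subseteq> insert None (Some ` A)" "None \<in> set (s l)" for l
    using s unfolding var_seq_def var_word_def by blast+
  have "set (vsubst (s l) b) \<subseteq> insert None (Some ` A)" if "(l, b) \<in> set t" for l b
  proof -
    have "b \<in> set (map snd t)" using that by (metis image_eqI set_map snd_conv)
    then have "b \<in> insert None (Some ` A)" using t(1) unfolding Located_def by blast
    then show ?thesis using letters(1)[of l] unfolding vsubst_def by (auto split: option.splits)
  qed
  then have "set (realize s t) \<subseteq> insert None (Some ` A)" unfolding realize_def by force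
  moreover obtain l where l: "(l, None) \<in> set t" using t(2) unfolding Var_def by auto
  then have "None \<in> set (realize s t)"
    using letters(2)[of l] unfolding realize_def by (force simp: vsubst_None)
  ultimately show ?thesis unfolding var_word_def by blast
qed

lemma realize_vspan:
  "t \<in> Located A \<Longrightarrow> t \<in> Var \<Longrightarrow> set (map fst t) \<subseteq> I \<Longrightarrow> realize s t \<in> vspan A s I"
  unfolding vspan_def realize_def Located_def Var_def by blast

text \<open>Located words with a variable, each located beyond the previous one, realise an extracted
  subsequence: the blocks are cut after the last position of each word.\<close>
lemma realize_extracted:
  assumes Loc: "\<And>n. t n \<in> Located A" and V: "\<And>n. t n \<in> Var"
    and beyond: "\<And>n. t (Suc n) \<in> Above (maxpos (t n))"
  shows "extracted A (\<lambda>n. realize s (t n)) s"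
proof -
  define m where "m i = (case i of 0 \<Rightarrow> 0 | Suc j \<Rightarrow> Suc (maxpos (t j)))" for i
  have block: "set (map fst (t i)) \<subseteq> {m i..<m (Suc i)}" for i
  proof
    fix l assume l: "l \<in> set (map fst (t i))"
    have "m i \<le> l"
    proof (cases i)
      case (Suc j)
      then show ?thesis using beyond[of j] l unfolding m_def Above_def by (auto simp: Suc_le_eq)
    qed (simp add: m_def)
    moreover have "l < m (Suc i)" using maxpos_ge[OF l] unfolding m_def by simp
    ultimately show "l \<in> {m i..<m (Suc i)}" by simp
  qed
  have "m i < m (Suc i)" for i
  proof -
    obtain l where "l \<in> set (map fst (t i))" using Loc[of i] unfolding Located_def by (cases "t i") auto
    then show ?thesis using block by fastforce
  qed
  then show ?thesis unfolding extracted_def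
    using realize_vspan[OF Loc V block] by (intro allI exI[of _ m]) (simp add: m_def)
qed

context idempotent_pair_setting
begin

lemma span_in_realizations:
  assumes s: "var_seq A s" and K: "K \<in> p"
  shows "\<exists>w. var_seq A w \<and> extracted A w s \<and> cspan A w UNIV \<subseteq> realize_const s ` K"
proof (intro exI conjI)
  let ?w = "\<lambda>n. realize s (stage_word K n)"
  show "var_seq A ?w" unfolding var_seq_def
    using realize_var_word[OF s stage_word_Located[OF K] stage_word_Var[OF K]] by blast
  show "extracted A ?w s"
    using realize_extracted[where t="stage_word K" and s=s] stage_word_Located[OF K] stage_word_Var[OF K]
      stage_word_Above[OF K] by blast
  show "cspan A ?w UNIV \<subseteq> realize_const s ` K"
  proof
    fix z assume "z \<in> cspan A ?w UNIV"
    then obtain ps where ps: "z = concat (map (\<lambda>(l, a). csubst (?w l) a) ps)" "ps \<noteq> []"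
      "sorted_wrt (<) (map fst ps)" "set (map snd ps) \<subseteq> A" unfolding cspan_def by blast
    have "z = realize_const s (concat (map (\<lambda>(l, a). subst a (stage_word K l)) ps))"
      unfolding ps(1) realize_const_concat map_map
      by (intro arg_cong[where f=concat] map_cong) (auto simp: csubst_realize)
    moreover have "concat (map (\<lambda>(l, a). subst a (stage_word K l)) ps) \<in> K"
      using stage_products_mem[OF K ps(2,3,4)] stage_set_anti[of 0] stage_set_0 by blast
    ultimately show "z \<in> realize_const s ` K" by blast
  qed
qed

end

text \<open>Colour located words by whether their
  realisation is in E; one of the two colour classes belongs to the idempotent p.\<close>
theorem infinite_hales_jewett:
  assumes "finite A" "A \<noteq> {}" and s: "var_seq A s"
  shows "\<exists>w. var_seq A w \<and> extracted A w s \<and> (cspan A w UNIV \<subseteq> E \<or> cspan A w UNIV \<inter> E = {})"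
proof -
  interpret located_words A using assms(1,2) by unfold_locales
  obtain p q where "p \<in> Clo {Const}" "uprod p p = p" "q \<in> Clo {Var}"
    "\<And>a. a \<in> A \<Longrightarrow> umap (subst a) q = p"
    using idempotent_pair by blast
  then interpret idempotent_pair_setting A p q by unfold_locales
  define K where "K = {x. realize_const s x \<in> E}"
  have "K \<in> p \<or> - K \<in> p" using ultrafilter_Compl[OF p_ultrafilter] by blast
  then show ?thesis using span_in_realizations[OF s] unfolding K_def by blast
qed

text \<open>The lemma: largeness of E forces the first alternative of the Hales--Jewett dichotomy,
  and then \<open>span_subset_large\<close> applies.\<close>
theorem lemma2p10:
  fixes A :: "'a set" and E :: "'a list set" and s :: "nat \<Rightarrow> 'a option list"
  assumes "finite A" and "A \<noteq> {}"
    and "E \<subseteq> lists A"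
    and "var_seq A s"
    and "large A E s"
  shows "\<exists>w. var_seq A w \<and> extracted A w s \<and>
           (\<forall>n. large A (E \<inter> shiftset A E (cspan A w {0..n})) (\<lambda>i. w (n + 1 + i)))"
proof -
  obtain w where w: "var_seq A w" "extracted A w s"
    and mono: "cspan A w UNIV \<subseteq> E \<or> cspan A w UNIV \<inter> E = {}"
    using infinite_hales_jewett[OF assms(1,2,4)] by blast
  have "E \<inter> cspan A w UNIV \<noteq> {}" using assms(5) w unfolding large_def by blast
  then have "cspan A w UNIV \<subseteq> E" using mono by blast
  then show ?thesis using w span_subset_large[OF assms(2,3)] by blast
qed

end
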